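(* Let $\Pi_0$ be a group and $\Pi_1$, $M$ abelian $\Pi_0$-modules. Let $E$ be the crossed module with group part $\Pi_0$, module part $\Pi_1$ (with its given $\Pi_0$-action) and trivial structure morphism $\Pi_1\to\Pi_0$. Then $H^2(E,M)\cong\operatorname{Hom}_{\Pi_0}(\Pi_1,M)\oplus H^2(\Pi_0,M)$.
   Context: For a crossed module $V=(G_V,M_V,\mu)$ (left action ${}^gm$, $\mu({}^gm)=g\mu(m)g^{-1}$, ${}^{\mu(n)}m=nmn^{-1}$) with $\pi_0(V)=G_V/\mu(M_V)$ and an abelian $\pi_0(V)$-module $M$, $H^2(V,M)$ is the second cohomology of the complex $C^1(V,M)=\mathrm{Map}(G_V,M)\to C^2(V,M)=\mathrm{Map}(M_V\times G_V\times G_V,M)\to C^3(V,M)=\mathrm{Map}(M_V\times M_V\times G_V\times M_V\times G_V\times G_V,M)$ with $(dc)(m,h,g)=c(\mu(m)h)-c(hg)+\bar hc(g)$, $(dc)(p,n,k,m,h,g)=c(p,\mu(n)k,\mu(m)h)-c(pn,k,hg)+c(n\,{}^km,kh,g)-\bar kc(m,h,g)$, where $\bar g$ is the class of $g$ in $\pi_0(V)$. $H^2(\Pi_0,M)$ is ordinary group cohomology. *)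

theory Defs
  imports "HOL-Algebra.Algebra"
begin

text \<open>All groups are HOL-Algebra groups, written multiplicatively (also the abelian ones).\<close>

definition G_module ::
  "('g,'x) monoid_scheme \<Rightarrow> ('m,'y) monoid_scheme \<Rightarrow> ('g \<Rightarrow> 'm \<Rightarrow> 'm) \<Rightarrow> bool" where
  "G_module G M phi \<longleftrightarrow> group G \<and> comm_group M \<and>
     (\<forall>g\<in>carrier G. \<forall>m\<in>carrier M. phi g m \<in> carrier M) \<and>
     (\<forall>g\<in>carrier G. \<forall>m\<in>carrier M. \<forall>n\<in>carrier M.
         phi g (m \<otimes>\<^bsub>M\<^esub> n) = phi g m \<otimes>\<^bsub>M\<^esub> phi g n) \<and>
     (\<forall>m\<in>carrier M. phi \<one>\<^bsub>G\<^esub> m = m) \<and>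
     (\<forall>g\<in>carrier G. \<forall>h\<in>carrier G. \<forall>m\<in>carrier M.
         phi (g \<otimes>\<^bsub>G\<^esub> h) m = phi g (phi h m))"

definition cochains :: "'a set \<Rightarrow> ('m,'y) monoid_scheme \<Rightarrow> ('a \<Rightarrow> 'm) monoid" where
  "cochains A M = \<lparr>carrier = extensional A \<inter> (A \<rightarrow> carrier M),
     monoid.mult = (\<lambda>f f'. \<lambda>x\<in>A. f x \<otimes>\<^bsub>M\<^esub> f' x),
     one = (\<lambda>x\<in>A. \<one>\<^bsub>M\<^esub>)\<rparr>"

text \<open>Crossed module V = (G, P, mu) with action alpha of G on P; M is a pi_0(V)-module,
  given as a G-action phi on M (trivial on mu(P)), so that bar h acts as phi h.\<close>

definition xmod_d1 ::
  "('g,'x) monoid_scheme \<Rightarrow> ('p,'z) monoid_scheme \<Rightarrow> ('p \<Rightarrow> 'g) \<Rightarrow> ('m,'y) monoid_scheme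
   \<Rightarrow> ('g \<Rightarrow> 'm \<Rightarrow> 'm) \<Rightarrow> ('g \<Rightarrow> 'm) \<Rightarrow> ('p \<times> 'g \<times> 'g \<Rightarrow> 'm)" where
  "xmod_d1 G P mu M phi c = (\<lambda>(m,h,g) \<in> carrier P \<times> carrier G \<times> carrier G.
      c (mu m \<otimes>\<^bsub>G\<^esub> h) \<otimes>\<^bsub>M\<^esub> inv\<^bsub>M\<^esub> (c (h \<otimes>\<^bsub>G\<^esub> g)) \<otimes>\<^bsub>M\<^esub> phi h (c g))"

definition xmod_d2 ::
  "('g,'x) monoid_scheme \<Rightarrow> ('p,'z) monoid_scheme \<Rightarrow> ('p \<Rightarrow> 'g) \<Rightarrow> ('g \<Rightarrow> 'p \<Rightarrow> 'p)
   \<Rightarrow> ('m,'y) monoid_scheme \<Rightarrow> ('g \<Rightarrow> 'm \<Rightarrow> 'm) \<Rightarrow> ('p \<times> 'g \<times> 'g \<Rightarrow> 'm)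
   \<Rightarrow> ('p \<times> 'p \<times> 'g \<times> 'p \<times> 'g \<times> 'g \<Rightarrow> 'm)" where
  "xmod_d2 G P mu alpha M phi c =
     (\<lambda>(p,n,k,m,h,g) \<in> carrier P \<times> carrier P \<times> carrier G \<times> carrier P \<times> carrier G \<times> carrier G.
        c (p, mu n \<otimes>\<^bsub>G\<^esub> k, mu m \<otimes>\<^bsub>G\<^esub> h)
        \<otimes>\<^bsub>M\<^esub> inv\<^bsub>M\<^esub> (c (p \<otimes>\<^bsub>P\<^esub> n, k, h \<otimes>\<^bsub>G\<^esub> g))
        \<otimes>\<^bsub>M\<^esub> c (n \<otimes>\<^bsub>P\<^esub> alpha k m, k \<otimes>\<^bsub>G\<^esub> h, g)
        \<otimes>\<^bsub>M\<^esub> inv\<^bsub>M\<^esub> (phi k (c (m,h,g))))"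

definition xmod_C2 ::
  "('g,'x) monoid_scheme \<Rightarrow> ('p,'z) monoid_scheme \<Rightarrow> ('m,'y) monoid_scheme
   \<Rightarrow> ('p \<times> 'g \<times> 'g \<Rightarrow> 'm) monoid" where
  "xmod_C2 G P M = cochains (carrier P \<times> carrier G \<times> carrier G) M"

definition xmod_Z2 where
  "xmod_Z2 G P mu alpha M phi =
     {c \<in> carrier (xmod_C2 G P M).
        xmod_d2 G P mu alpha M phi c
          = \<one>\<^bsub>cochains (carrier P \<times> carrier P \<times> carrier G \<times> carrier P \<times> carrier G \<times> carrier G) M\<^esub>}"

definition xmod_B2 where
  "xmod_B2 G P mu M phi = xmod_d1 G P mu M phi ` carrier (cochains (carrier G) M)"

definition xmod_H2 ::
  "('g,'x) monoid_scheme \<Rightarrow> ('p,'z) monoid_scheme \<Rightarrow> ('p \<Rightarrow> 'g) \<Rightarrow> ('g \<Rightarrow> 'p \<Rightarrow> 'p)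
   \<Rightarrow> ('m,'y) monoid_scheme \<Rightarrow> ('g \<Rightarrow> 'm \<Rightarrow> 'm) \<Rightarrow> ('p \<times> 'g \<times> 'g \<Rightarrow> 'm) set monoid" where
  "xmod_H2 G P mu alpha M phi =
     ((xmod_C2 G P M)\<lparr>carrier := xmod_Z2 G P mu alpha M phi\<rparr>) Mod xmod_B2 G P mu M phi"

definition grp_d1 ::
  "('g,'x) monoid_scheme \<Rightarrow> ('m,'y) monoid_scheme \<Rightarrow> ('g \<Rightarrow> 'm \<Rightarrow> 'm)
   \<Rightarrow> ('g \<Rightarrow> 'm) \<Rightarrow> ('g \<times> 'g \<Rightarrow> 'm)" where
  "grp_d1 G M phi f = (\<lambda>(g,h) \<in> carrier G \<times> carrier G.
      phi g (f h) \<otimes>\<^bsub>M\<^esub> inv\<^bsub>M\<^esub> (f (g \<otimes>\<^bsub>G\<^esub> h)) \<otimes>\<^bsub>M\<^esub> f g)"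

definition grp_d2 ::
  "('g,'x) monoid_scheme \<Rightarrow> ('m,'y) monoid_scheme \<Rightarrow> ('g \<Rightarrow> 'm \<Rightarrow> 'm)
   \<Rightarrow> ('g \<times> 'g \<Rightarrow> 'm) \<Rightarrow> ('g \<times> 'g \<times> 'g \<Rightarrow> 'm)" where
  "grp_d2 G M phi c = (\<lambda>(g,h,k) \<in> carrier G \<times> carrier G \<times> carrier G.
      phi g (c (h,k)) \<otimes>\<^bsub>M\<^esub> inv\<^bsub>M\<^esub> (c (g \<otimes>\<^bsub>G\<^esub> h, k))
      \<otimes>\<^bsub>M\<^esub> c (g, h \<otimes>\<^bsub>G\<^esub> k) \<otimes>\<^bsub>M\<^esub> inv\<^bsub>M\<^esub> (c (g,h)))"

definition grp_H2 ::
  "('g,'x) monoid_scheme \<Rightarrow> ('m,'y) monoid_scheme \<Rightarrow> ('g \<Rightarrow> 'm \<Rightarrow> 'm)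
   \<Rightarrow> ('g \<times> 'g \<Rightarrow> 'm) set monoid" where
  "grp_H2 G M phi =
     ((cochains (carrier G \<times> carrier G) M)\<lparr>carrier :=
        {c \<in> carrier (cochains (carrier G \<times> carrier G) M).
           grp_d2 G M phi c = \<one>\<^bsub>cochains (carrier G \<times> carrier G \<times> carrier G) M\<^esub>}\<rparr>)
     Mod (grp_d1 G M phi ` carrier (cochains (carrier G) M))"

definition equiv_Hom ::
  "('g,'x) monoid_scheme \<Rightarrow> ('p,'z) monoid_scheme \<Rightarrow> ('g \<Rightarrow> 'p \<Rightarrow> 'p)
   \<Rightarrow> ('m,'y) monoid_scheme \<Rightarrow> ('g \<Rightarrow> 'm \<Rightarrow> 'm) \<Rightarrow> ('p \<Rightarrow> 'm) monoid" where
  "equiv_Hom G P alpha M phi = (cochains (carrier P) M)\<lparr>carrier :=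
     {f \<in> hom P M. f \<in> extensional (carrier P) \<and>
        (\<forall>g\<in>carrier G. \<forall>m\<in>carrier P. f (alpha g m) = phi g (f m))}\<rparr>"

end

theory Submission
  imports Defs
begin

text \<open>
  With trivial boundary the 2-cocycle identity of E no longer couples the P-argument
  of a cochain with its group arguments, and every 2-cocycle c factors as
      c(m,h,g) = f(h,g) psi(m),   f(h,g) = c(1,h,g),   psi(m) = c(m,1,1) c(1,1,1)^-1,
  where f is an ordinary group 2-cocycle of G and psi is a G-equivariant homomorphism P -> M;
  conversely every such pair glues to a cocycle, and the coboundaries of E are exactly the
  glued cochains with psi = 1 and f a group coboundary.  Hence c |-> (psi, [f]) is a
  surjective homomorphism Z^2(E,M) -> Hom_G(P,M) x H^2(G,M) with kernel B^2(E,M), and the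
  first isomorphism theorem gives H^2(E,M) = Hom_G(P,M) x H^2(G,M).
\<close>

lemma cochains_carrier:
  "f \<in> carrier (cochains A M) \<longleftrightarrow> f \<in> extensional A \<and> (\<forall>x\<in>A. f x \<in> carrier M)"
  by (auto simp: cochains_def)

lemma cochains_mult [simp]: "f \<otimes>\<^bsub>cochains A M\<^esub> f' = (\<lambda>x\<in>A. f x \<otimes>\<^bsub>M\<^esub> f' x)"
  by (simp add: cochains_def)

lemma cochains_one [simp]: "\<one>\<^bsub>cochains A M\<^esub> = (\<lambda>x\<in>A. \<one>\<^bsub>M\<^esub>)"
  by (simp add: cochains_def)

lemma cochains_eq_one_iff:
  "f \<in> extensional A \<Longrightarrow> f = \<one>\<^bsub>cochains A M\<^esub> \<longleftrightarrow> (\<forall>x\<in>A. f x = \<one>\<^bsub>M\<^esub>)"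
  by (auto intro: extensionalityI[where A=A])

lemma cochains_comm_group:
  assumes "comm_group M" shows "comm_group (cochains A M)"
proof -
  interpret M: comm_group M by fact
  show ?thesis
  proof (rule comm_groupI)
    fix x y z
    assume x: "x \<in> carrier (cochains A M)" and y: "y \<in> carrier (cochains A M)"
      and z: "z \<in> carrier (cochains A M)"
    show "x \<otimes>\<^bsub>cochains A M\<^esub> y \<in> carrier (cochains A M)"
      using x y by (auto simp: cochains_carrier)
    show "x \<otimes>\<^bsub>cochains A M\<^esub> y \<otimes>\<^bsub>cochains A M\<^esub> z = x \<otimes>\<^bsub>cochains A M\<^esub> (y \<otimes>\<^bsub>cochains A M\<^esub> z)"
      using x y z by (auto simp: cochains_carrier M.m_assoc intro!: restrict_ext)
    show "x \<otimes>\<^bsub>cochains A M\<^esub> y = y \<otimes>\<^bsub>cochains A M\<^esub> x"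
      using x y by (auto simp: cochains_carrier M.m_comm intro!: restrict_ext)
    show "\<one>\<^bsub>cochains A M\<^esub> \<otimes>\<^bsub>cochains A M\<^esub> x = x"
      using x by (intro extensionalityI[where A=A]) (auto simp: cochains_carrier)
    show "\<exists>y\<in>carrier (cochains A M). y \<otimes>\<^bsub>cochains A M\<^esub> x = \<one>\<^bsub>cochains A M\<^esub>"
      using x by (intro bexI[of _ "\<lambda>a\<in>A. inv\<^bsub>M\<^esub> x a"]) (auto simp: cochains_carrier)
  qed (auto simp: cochains_carrier)
qed

lemma cochain_map_hom:
  assumes "comm_group M"
    and closed: "\<And>f. f \<in> carrier (cochains A M) \<Longrightarrow> D f \<in> carrier (cochains B N)"
    and mult: "\<And>f f' x. f \<in> carrier (cochains A M) \<Longrightarrow> f' \<in> carrier (cochains A M) \<Longrightarrow> x \<in> B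
                 \<Longrightarrow> D (f \<otimes>\<^bsub>cochains A M\<^esub> f') x = D f x \<otimes>\<^bsub>N\<^esub> D f' x"
  shows "D \<in> hom (cochains A M) (cochains B N)"
proof (rule homI)
  interpret C: comm_group "cochains A M" by (rule cochains_comm_group) fact
  fix f f' assume f: "f \<in> carrier (cochains A M)" and f': "f' \<in> carrier (cochains A M)"
  show "D (f \<otimes>\<^bsub>cochains A M\<^esub> f') = D f \<otimes>\<^bsub>cochains B N\<^esub> D f'"
    using closed[OF C.m_closed[OF f f']] mult[OF f f']
    by (intro extensionalityI[where A=B]) (auto simp: cochains_carrier)
qed (rule closed)

lemma (in comm_group) quotient_eq_one_iff:
  assumes "a \<in> carrier G" "b \<in> carrier G" "c \<in> carrier G" "d \<in> carrier G"
  shows "a \<otimes> inv b \<otimes> c \<otimes> inv d = \<one> \<longleftrightarrow> a \<otimes> c = b \<otimes> d"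
proof -
  have "a \<otimes> inv b \<otimes> c \<otimes> inv d = (a \<otimes> c) \<otimes> inv (b \<otimes> d)"
    using assms by (simp add: inv_mult m_ac)
  then show ?thesis
    using assms by (simp add: inv_solve_right')
qed

lemma (in comm_group) conjugate_cancel:
  "a \<in> carrier G \<Longrightarrow> x \<in> carrier G \<Longrightarrow> a \<otimes> (x \<otimes> inv a) = x"
  by (metis inv_closed m_lcomm r_inv r_one)

lemma (in comm_group) subgroup_normal_in_subgroup:
  assumes B: "subgroup B G" and Z: "subgroup Z G" and BZ: "B \<subseteq> Z"
  shows "B \<lhd> G\<lparr>carrier := Z\<rparr>"
proof -
  have "comm_group (G\<lparr>carrier := Z\<rparr>)"
  proof (rule group.group_comm_groupI)
    show "group (G\<lparr>carrier := Z\<rparr>)"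
      using subgroup.subgroup_is_group[OF Z is_group] .
  qed (use Z subgroup.subset in \<open>auto intro: m_comm\<close>)
  then show ?thesis
    using comm_group.subgroup_imp_normal subgroup_incl[OF B Z BZ] by blast
qed

lemma G_module_closed:
  "G_module G A act \<Longrightarrow> g \<in> carrier G \<Longrightarrow> a \<in> carrier A \<Longrightarrow> act g a \<in> carrier A"
  by (simp add: G_module_def)

lemma G_module_unit: "G_module G A act \<Longrightarrow> a \<in> carrier A \<Longrightarrow> act \<one>\<^bsub>G\<^esub> a = a"
  by (simp add: G_module_def)

lemma G_module_comp:
  "G_module G A act \<Longrightarrow> g \<in> carrier G \<Longrightarrow> h \<in> carrier G \<Longrightarrow> a \<in> carrier A
   \<Longrightarrow> act (g \<otimes>\<^bsub>G\<^esub> h) a = act g (act h a)"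
  by (simp add: G_module_def)

lemma G_module_group_hom: "G_module G A act \<Longrightarrow> g \<in> carrier G \<Longrightarrow> group_hom A A (act g)"
  by (auto simp: G_module_def group_hom_def group_hom_axioms_def hom_def comm_group_def)

section \<open>Crossed modules with trivial boundary\<close>

locale trivial_boundary_xmod =
  fixes G :: "('g,'x) monoid_scheme" and P :: "('p,'z) monoid_scheme"
    and M :: "('m,'y) monoid_scheme"
    and alpha :: "'g \<Rightarrow> 'p \<Rightarrow> 'p" and phi :: "'g \<Rightarrow> 'm \<Rightarrow> 'm"
  assumes P_module: "G_module G P alpha" and M_module: "G_module G M phi"
begin

sublocale G: group G using M_module by (simp add: G_module_def)
sublocale P: comm_group P using P_module by (simp add: G_module_def)
sublocale M: comm_group M using M_module by (simp add: G_module_def)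

lemmas alpha_closed [simp] = G_module_closed[OF P_module]
lemmas alpha_unit [simp] = G_module_unit[OF P_module]
lemma alpha_one [simp]: "g \<in> carrier G \<Longrightarrow> alpha g \<one>\<^bsub>P\<^esub> = \<one>\<^bsub>P\<^esub>"
  using group_hom.hom_one[OF G_module_group_hom[OF P_module]] by blast

lemmas phi_closed [simp] = G_module_closed[OF M_module]
lemmas phi_unit [simp] = G_module_unit[OF M_module]
lemmas phi_comp = G_module_comp[OF M_module]

lemma phi_mult:
  "g \<in> carrier G \<Longrightarrow> m \<in> carrier M \<Longrightarrow> n \<in> carrier M \<Longrightarrow> phi g (m \<otimes>\<^bsub>M\<^esub> n) = phi g m \<otimes>\<^bsub>M\<^esub> phi g n"
  using group_hom.hom_mult[OF G_module_group_hom[OF M_module]] by blast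

lemma phi_inv [simp]:
  "g \<in> carrier G \<Longrightarrow> m \<in> carrier M \<Longrightarrow> phi g (inv\<^bsub>M\<^esub> m) = inv\<^bsub>M\<^esub> (phi g m)"
  using group_hom.hom_inv[OF G_module_group_hom[OF M_module]] by blast

lemma phi_one [simp]: "g \<in> carrier G \<Longrightarrow> phi g \<one>\<^bsub>M\<^esub> = \<one>\<^bsub>M\<^esub>"
  using group_hom.hom_one[OF G_module_group_hom[OF M_module]] by blast

abbreviation "C1 \<equiv> cochains (carrier G) M"
abbreviation "D3 \<equiv> carrier P \<times> carrier G \<times> carrier G"
abbreviation "C2 \<equiv> cochains D3 M"
abbreviation "D6 \<equiv> carrier P \<times> carrier P \<times> carrier G \<times> D3"
abbreviation "G2 \<equiv> cochains (carrier G \<times> carrier G) M"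
abbreviation "G3 \<equiv> cochains (carrier G \<times> carrier G \<times> carrier G) M"
abbreviation "Z2 \<equiv> xmod_Z2 G P (\<lambda>_. \<one>\<^bsub>G\<^esub>) alpha M phi"
abbreviation "B2 \<equiv> xmod_B2 G P (\<lambda>_. \<one>\<^bsub>G\<^esub>) M phi"
abbreviation "Z2G \<equiv> {c \<in> carrier G2. grp_d2 G M phi c = \<one>\<^bsub>G3\<^esub>}"
abbreviation "B2G \<equiv> grp_d1 G M phi ` carrier C1"
abbreviation "EH \<equiv> equiv_Hom G P alpha M phi"

lemma cochains_comm_group_M: "comm_group (cochains A M)"
  by (rule cochains_comm_group) (rule M.comm_group_axioms)

lemma grp_cocycle_iff:
  "c \<in> Z2G \<longleftrightarrow> c \<in> carrier G2 \<and> (\<forall>k\<in>carrier G. \<forall>h\<in>carrier G. \<forall>g\<in>carrier G.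
     c (k,h) \<otimes>\<^bsub>M\<^esub> c (k \<otimes>\<^bsub>G\<^esub> h, g) = c (k, h \<otimes>\<^bsub>G\<^esub> g) \<otimes>\<^bsub>M\<^esub> phi k (c (h,g)))"
proof (cases "c \<in> carrier G2")
  case True
  then have cc: "\<And>x y. x \<in> carrier G \<Longrightarrow> y \<in> carrier G \<Longrightarrow> c (x,y) \<in> carrier M"
    by (auto simp: cochains_carrier)
  have "grp_d2 G M phi c = \<one>\<^bsub>G3\<^esub> \<longleftrightarrow>
          (\<forall>x\<in>carrier G \<times> carrier G \<times> carrier G. grp_d2 G M phi c x = \<one>\<^bsub>M\<^esub>)"
    by (rule cochains_eq_one_iff) (simp add: grp_d2_def)
  also have "\<dots> \<longleftrightarrow> (\<forall>k\<in>carrier G. \<forall>h\<in>carrier G. \<forall>g\<in>carrier G.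
     c (k,h) \<otimes>\<^bsub>M\<^esub> c (k \<otimes>\<^bsub>G\<^esub> h, g) = c (k, h \<otimes>\<^bsub>G\<^esub> g) \<otimes>\<^bsub>M\<^esub> phi k (c (h,g)))"
  proof -
    have "grp_d2 G M phi c (k,h,g) = \<one>\<^bsub>M\<^esub> \<longleftrightarrow>
            c (k,h) \<otimes>\<^bsub>M\<^esub> c (k \<otimes>\<^bsub>G\<^esub> h, g) = c (k, h \<otimes>\<^bsub>G\<^esub> g) \<otimes>\<^bsub>M\<^esub> phi k (c (h,g))"
      if "k \<in> carrier G" "h \<in> carrier G" "g \<in> carrier G" for k h g
      using that M.quotient_eq_one_iff[of "phi k (c (h,g))" "c (k \<otimes>\<^bsub>G\<^esub> h, g)" "c (k, h \<otimes>\<^bsub>G\<^esub> g)" "c (k,h)"]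
      by (auto simp: grp_d2_def cc M.m_comm)
    then show ?thesis by auto
  qed
  finally show ?thesis using True by blast
qed simp

lemma xmod_cocycle_iff:
  "c \<in> Z2 \<longleftrightarrow> c \<in> carrier C2 \<and>
     (\<forall>p\<in>carrier P. \<forall>n\<in>carrier P. \<forall>k\<in>carrier G. \<forall>m\<in>carrier P. \<forall>h\<in>carrier G. \<forall>g\<in>carrier G.
        c (p,k,h) \<otimes>\<^bsub>M\<^esub> c (n \<otimes>\<^bsub>P\<^esub> alpha k m, k \<otimes>\<^bsub>G\<^esub> h, g)
        = c (p \<otimes>\<^bsub>P\<^esub> n, k, h \<otimes>\<^bsub>G\<^esub> g) \<otimes>\<^bsub>M\<^esub> phi k (c (m,h,g)))"
proof (cases "c \<in> carrier C2")
  case True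
  then have cc: "\<And>x y z. x \<in> carrier P \<Longrightarrow> y \<in> carrier G \<Longrightarrow> z \<in> carrier G \<Longrightarrow> c (x,y,z) \<in> carrier M"
    by (auto simp: cochains_carrier)
  have "xmod_d2 G P (\<lambda>_. \<one>\<^bsub>G\<^esub>) alpha M phi c = \<one>\<^bsub>cochains D6 M\<^esub> \<longleftrightarrow>
          (\<forall>x\<in>D6. xmod_d2 G P (\<lambda>_. \<one>\<^bsub>G\<^esub>) alpha M phi c x = \<one>\<^bsub>M\<^esub>)"
    by (rule cochains_eq_one_iff) (simp add: xmod_d2_def)
  then show ?thesis
    using True by (auto simp: xmod_Z2_def xmod_C2_def xmod_d2_def M.quotient_eq_one_iff cc)
qed (simp add: xmod_Z2_def xmod_C2_def)

lemma grp_coboundary_mult: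
  assumes b: "b \<in> carrier C1" and x: "x \<in> carrier G" and y: "y \<in> carrier G"
  shows "grp_d1 G M phi b (x,y) \<otimes>\<^bsub>M\<^esub> b (x \<otimes>\<^bsub>G\<^esub> y) = phi x (b y) \<otimes>\<^bsub>M\<^esub> b x"
proof -
  have bc: "\<And>z. z \<in> carrier G \<Longrightarrow> b z \<in> carrier M" using b by (auto simp: cochains_carrier)
  have "grp_d1 G M phi b (x,y) = (phi x (b y) \<otimes>\<^bsub>M\<^esub> b x) \<otimes>\<^bsub>M\<^esub> inv\<^bsub>M\<^esub> b (x \<otimes>\<^bsub>G\<^esub> y)"
    using x y by (simp add: grp_d1_def bc M.m_ac)
  then show ?thesis using x y by (simp add: bc M.m_assoc)
qed

text \<open>d(db) = 1 for group cochains: multiplying both sides of the cocycle identity for c = db by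
  the same product W of values of b turns every factor into an inverse-free expression.\<close>

lemma grp_coboundary_cocycle:
  assumes b: "b \<in> carrier C1"
  shows "grp_d1 G M phi b \<in> Z2G"
proof -
  let ?c = "grp_d1 G M phi b"
  have bc [simp]: "\<And>z. z \<in> carrier G \<Longrightarrow> b z \<in> carrier M" using b by (auto simp: cochains_carrier)
  have cc [simp]: "\<And>x y. x \<in> carrier G \<Longrightarrow> y \<in> carrier G \<Longrightarrow> ?c (x,y) \<in> carrier M"
    by (simp add: grp_d1_def)
  note key = grp_coboundary_mult[OF b]
  show ?thesis unfolding grp_cocycle_iff
  proof (intro conjI ballI)
    show "?c \<in> carrier G2" by (auto simp: grp_d1_def cochains_carrier)
    fix k h g assume k: "k \<in> carrier G" and h: "h \<in> carrier G" and g: "g \<in> carrier G"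
    let ?W = "b (k \<otimes>\<^bsub>G\<^esub> h) \<otimes>\<^bsub>M\<^esub> (b (k \<otimes>\<^bsub>G\<^esub> (h \<otimes>\<^bsub>G\<^esub> g)) \<otimes>\<^bsub>M\<^esub> phi k (b (h \<otimes>\<^bsub>G\<^esub> g)))"
    have "?c (k,h) \<otimes>\<^bsub>M\<^esub> ?c (k \<otimes>\<^bsub>G\<^esub> h, g) \<otimes>\<^bsub>M\<^esub> ?W
        = (?c (k,h) \<otimes>\<^bsub>M\<^esub> b (k \<otimes>\<^bsub>G\<^esub> h))
          \<otimes>\<^bsub>M\<^esub> ((?c (k \<otimes>\<^bsub>G\<^esub> h, g) \<otimes>\<^bsub>M\<^esub> b (k \<otimes>\<^bsub>G\<^esub> h \<otimes>\<^bsub>G\<^esub> g)) \<otimes>\<^bsub>M\<^esub> phi k (b (h \<otimes>\<^bsub>G\<^esub> g)))"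
      using k h g by (simp add: G.m_assoc M.m_ac)
    also have "\<dots> = (phi k (b h) \<otimes>\<^bsub>M\<^esub> b k)
          \<otimes>\<^bsub>M\<^esub> ((phi (k \<otimes>\<^bsub>G\<^esub> h) (b g) \<otimes>\<^bsub>M\<^esub> b (k \<otimes>\<^bsub>G\<^esub> h)) \<otimes>\<^bsub>M\<^esub> phi k (b (h \<otimes>\<^bsub>G\<^esub> g)))"
      using k h g by (simp add: key)
    also have "\<dots> = (?c (k, h \<otimes>\<^bsub>G\<^esub> g) \<otimes>\<^bsub>M\<^esub> b (k \<otimes>\<^bsub>G\<^esub> (h \<otimes>\<^bsub>G\<^esub> g)))
          \<otimes>\<^bsub>M\<^esub> (phi k (?c (h,g) \<otimes>\<^bsub>M\<^esub> b (h \<otimes>\<^bsub>G\<^esub> g)) \<otimes>\<^bsub>M\<^esub> b (k \<otimes>\<^bsub>G\<^esub> h))"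
      using k h g by (simp add: key, simp add: phi_mult phi_comp M.m_ac)
    also have "\<dots> = ?c (k, h \<otimes>\<^bsub>G\<^esub> g) \<otimes>\<^bsub>M\<^esub> phi k (?c (h,g)) \<otimes>\<^bsub>M\<^esub> ?W"
      using k h g by (simp add: phi_mult M.m_ac)
    finally have "?c (k,h) \<otimes>\<^bsub>M\<^esub> ?c (k \<otimes>\<^bsub>G\<^esub> h, g) \<otimes>\<^bsub>M\<^esub> ?W
                  = ?c (k, h \<otimes>\<^bsub>G\<^esub> g) \<otimes>\<^bsub>M\<^esub> phi k (?c (h,g)) \<otimes>\<^bsub>M\<^esub> ?W" .
    then show "?c (k,h) \<otimes>\<^bsub>M\<^esub> ?c (k \<otimes>\<^bsub>G\<^esub> h, g) = ?c (k, h \<otimes>\<^bsub>G\<^esub> g) \<otimes>\<^bsub>M\<^esub> phi k (?c (h,g))"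
      by (rule M.r_cancel) (use k h g in simp_all)
  qed
qed

subsection \<open>Splitting a cochain into a homomorphism part and a group part\<close>

definition hom_part :: "('p \<times> 'g \<times> 'g \<Rightarrow> 'm) \<Rightarrow> 'p \<Rightarrow> 'm" where
  "hom_part c = (\<lambda>p\<in>carrier P. c (p, \<one>\<^bsub>G\<^esub>, \<one>\<^bsub>G\<^esub>) \<otimes>\<^bsub>M\<^esub> inv\<^bsub>M\<^esub> c (\<one>\<^bsub>P\<^esub>, \<one>\<^bsub>G\<^esub>, \<one>\<^bsub>G\<^esub>))"

definition group_part :: "('p \<times> 'g \<times> 'g \<Rightarrow> 'm) \<Rightarrow> 'g \<times> 'g \<Rightarrow> 'm" where
  "group_part c = (\<lambda>(k,h)\<in>carrier G \<times> carrier G. c (\<one>\<^bsub>P\<^esub>, k, h))"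

definition glue :: "('p \<Rightarrow> 'm) \<Rightarrow> ('g \<times> 'g \<Rightarrow> 'm) \<Rightarrow> 'p \<times> 'g \<times> 'g \<Rightarrow> 'm" where
  "glue \<psi> f = (\<lambda>(m,h,g)\<in>D3. f (h,g) \<otimes>\<^bsub>M\<^esub> \<psi> m)"

definition normalized :: "('p \<Rightarrow> 'm) \<Rightarrow> bool" where
  "normalized \<psi> \<longleftrightarrow> \<psi> \<in> extensional (carrier P) \<and> (\<forall>p\<in>carrier P. \<psi> p \<in> carrier M)
     \<and> \<psi> \<one>\<^bsub>P\<^esub> = \<one>\<^bsub>M\<^esub>"

lemma equiv_Hom_carrier:
  "\<psi> \<in> carrier EH \<longleftrightarrow> \<psi> \<in> hom P M \<and> \<psi> \<in> extensional (carrier P) \<and>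
     (\<forall>g\<in>carrier G. \<forall>m\<in>carrier P. \<psi> (alpha g m) = phi g (\<psi> m))"
  by (simp add: equiv_Hom_def)

lemma equiv_Hom_closed: "\<psi> \<in> carrier EH \<Longrightarrow> p \<in> carrier P \<Longrightarrow> \<psi> p \<in> carrier M"
  by (auto simp: equiv_Hom_carrier hom_def)

lemma equiv_Hom_normalized: "\<psi> \<in> carrier EH \<Longrightarrow> normalized \<psi>"
  unfolding normalized_def equiv_Hom_carrier
  using P.group_axioms M.group_axioms
  by (auto simp: hom_def intro: group_hom.hom_one[of P M] simp: group_hom_def group_hom_axioms_def)

lemma hom_part_normalized: "c \<in> carrier C2 \<Longrightarrow> normalized (hom_part c)"
  by (auto simp: normalized_def hom_part_def cochains_carrier)

lemma glue_carrier: "normalized \<psi> \<Longrightarrow> f \<in> carrier G2 \<Longrightarrow> glue \<psi> f \<in> carrier C2"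
  by (auto simp: normalized_def glue_def cochains_carrier)

lemma hom_part_glue: "normalized \<psi> \<Longrightarrow> f \<in> carrier G2 \<Longrightarrow> hom_part (glue \<psi> f) = \<psi>"
  by (intro extensionalityI[where A="carrier P"])
    (auto simp: normalized_def hom_part_def glue_def cochains_carrier M.m_assoc M.conjugate_cancel)

lemma group_part_glue: "normalized \<psi> \<Longrightarrow> f \<in> carrier G2 \<Longrightarrow> group_part (glue \<psi> f) = f"
  by (intro extensionalityI[where A="carrier G \<times> carrier G"])
    (auto simp: normalized_def group_part_def glue_def cochains_carrier)

text \<open>An equivariant homomorphism is characterised by the single identity
  psi(p) psi(n + k.m) = psi(p + n) k.psi(m), which is the form in which it appears in the
  cocycle condition.\<close>

lemma equiv_Hom_iff:
  assumes \<psi>: "normalized \<psi>"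
  shows "\<psi> \<in> carrier EH \<longleftrightarrow> (\<forall>p\<in>carrier P. \<forall>n\<in>carrier P. \<forall>k\<in>carrier G. \<forall>m\<in>carrier P.
           \<psi> p \<otimes>\<^bsub>M\<^esub> \<psi> (n \<otimes>\<^bsub>P\<^esub> alpha k m) = \<psi> (p \<otimes>\<^bsub>P\<^esub> n) \<otimes>\<^bsub>M\<^esub> phi k (\<psi> m))"
    (is "_ \<longleftrightarrow> (\<forall>p\<in>_. \<forall>n\<in>_. \<forall>k\<in>_. \<forall>m\<in>_. ?eq p n k m)")
proof
  have \<psi>c [simp]: "\<And>p. p \<in> carrier P \<Longrightarrow> \<psi> p \<in> carrier M" and \<psi>1 [simp]: "\<psi> \<one>\<^bsub>P\<^esub> = \<one>\<^bsub>M\<^esub>"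
    using \<psi> by (auto simp: normalized_def)
  {
    assume "\<psi> \<in> carrier EH"
    then show "\<forall>p\<in>carrier P. \<forall>n\<in>carrier P. \<forall>k\<in>carrier G. \<forall>m\<in>carrier P. ?eq p n k m"
      by (auto simp: equiv_Hom_carrier hom_def M.m_assoc)
  next
    assume eq: "\<forall>p\<in>carrier P. \<forall>n\<in>carrier P. \<forall>k\<in>carrier G. \<forall>m\<in>carrier P. ?eq p n k m"
    have shift: "\<psi> (n \<otimes>\<^bsub>P\<^esub> alpha k m) = \<psi> n \<otimes>\<^bsub>M\<^esub> phi k (\<psi> m)"
      if "n \<in> carrier P" "k \<in> carrier G" "m \<in> carrier P" for n k m
    proof -
      have "?eq \<one>\<^bsub>P\<^esub> n k m" using eq that by blast
      then show ?thesis using that by simp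
    qed
    have "\<psi> (alpha k m) = phi k (\<psi> m)" if "k \<in> carrier G" "m \<in> carrier P" for k m
      using shift[of "\<one>\<^bsub>P\<^esub>" k m] that by simp
    moreover have "\<psi> (n \<otimes>\<^bsub>P\<^esub> m) = \<psi> n \<otimes>\<^bsub>M\<^esub> \<psi> m" if "n \<in> carrier P" "m \<in> carrier P" for n m
      using shift[of n "\<one>\<^bsub>G\<^esub>" m] that by simp
    ultimately show "\<psi> \<in> carrier EH"
      using \<psi> by (auto simp: equiv_Hom_carrier hom_def normalized_def)
  }
qed

lemma glue_cocycle_identity:
  assumes \<psi>: "normalized \<psi>" and f: "f \<in> carrier G2"
    and x: "p \<in> carrier P" "n \<in> carrier P" "k \<in> carrier G" "m \<in> carrier P" "h \<in> carrier G"
      "g \<in> carrier G"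
  shows "glue \<psi> f (p,k,h) \<otimes>\<^bsub>M\<^esub> glue \<psi> f (n \<otimes>\<^bsub>P\<^esub> alpha k m, k \<otimes>\<^bsub>G\<^esub> h, g)
           = glue \<psi> f (p \<otimes>\<^bsub>P\<^esub> n, k, h \<otimes>\<^bsub>G\<^esub> g) \<otimes>\<^bsub>M\<^esub> phi k (glue \<psi> f (m,h,g))
    \<longleftrightarrow> (f (k,h) \<otimes>\<^bsub>M\<^esub> f (k \<otimes>\<^bsub>G\<^esub> h, g)) \<otimes>\<^bsub>M\<^esub> (\<psi> p \<otimes>\<^bsub>M\<^esub> \<psi> (n \<otimes>\<^bsub>P\<^esub> alpha k m))
      = (f (k, h \<otimes>\<^bsub>G\<^esub> g) \<otimes>\<^bsub>M\<^esub> phi k (f (h,g))) \<otimes>\<^bsub>M\<^esub> (\<psi> (p \<otimes>\<^bsub>P\<^esub> n) \<otimes>\<^bsub>M\<^esub> phi k (\<psi> m))"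
  using \<psi> f x by (simp add: normalized_def glue_def cochains_carrier phi_mult M.m_ac)

lemma glue_cocycle_iff:
  assumes \<psi>: "normalized \<psi>" and f: "f \<in> carrier G2"
  shows "glue \<psi> f \<in> Z2 \<longleftrightarrow> \<psi> \<in> carrier EH \<and> f \<in> Z2G"
proof -
  have \<psi>c [simp]: "\<And>p. p \<in> carrier P \<Longrightarrow> \<psi> p \<in> carrier M" and \<psi>1 [simp]: "\<psi> \<one>\<^bsub>P\<^esub> = \<one>\<^bsub>M\<^esub>"
    using \<psi> by (auto simp: normalized_def)
  have fc [simp]: "\<And>x y. x \<in> carrier G \<Longrightarrow> y \<in> carrier G \<Longrightarrow> f (x,y) \<in> carrier M"
    using f by (auto simp: cochains_carrier)
  let ?F = "\<lambda>k h g. f (k,h) \<otimes>\<^bsub>M\<^esub> f (k \<otimes>\<^bsub>G\<^esub> h, g)"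
  let ?F' = "\<lambda>k h g. f (k, h \<otimes>\<^bsub>G\<^esub> g) \<otimes>\<^bsub>M\<^esub> phi k (f (h,g))"
  let ?\<Psi> = "\<lambda>p n k m. \<psi> p \<otimes>\<^bsub>M\<^esub> \<psi> (n \<otimes>\<^bsub>P\<^esub> alpha k m)"
  let ?\<Psi>' = "\<lambda>p n k m. \<psi> (p \<otimes>\<^bsub>P\<^esub> n) \<otimes>\<^bsub>M\<^esub> phi k (\<psi> m)"
  have glue_Z2: "glue \<psi> f \<in> Z2 \<longleftrightarrow>
      (\<forall>p\<in>carrier P. \<forall>n\<in>carrier P. \<forall>k\<in>carrier G. \<forall>m\<in>carrier P. \<forall>h\<in>carrier G. \<forall>g\<in>carrier G.
         ?F k h g \<otimes>\<^bsub>M\<^esub> ?\<Psi> p n k m = ?F' k h g \<otimes>\<^bsub>M\<^esub> ?\<Psi>' p n k m)"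
    unfolding xmod_cocycle_iff using glue_carrier[OF \<psi> f] glue_cocycle_identity[OF \<psi> f]
    by simp
  have f_Z2G: "f \<in> Z2G \<longleftrightarrow> (\<forall>k\<in>carrier G. \<forall>h\<in>carrier G. \<forall>g\<in>carrier G. ?F k h g = ?F' k h g)"
    using f grp_cocycle_iff by simp
  have \<psi>_EH: "\<psi> \<in> carrier EH \<longleftrightarrow> (\<forall>p\<in>carrier P. \<forall>n\<in>carrier P. \<forall>k\<in>carrier G. \<forall>m\<in>carrier P.
                 ?\<Psi> p n k m = ?\<Psi>' p n k m)"
    by (rule equiv_Hom_iff[OF \<psi>])
  show ?thesis
  proof
    assume Z: "glue \<psi> f \<in> Z2"
    have F: "?F k h g = ?F' k h g" if "k \<in> carrier G" "h \<in> carrier G" "g \<in> carrier G" for k h g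
    proof -
      have "?F k h g \<otimes>\<^bsub>M\<^esub> ?\<Psi> \<one>\<^bsub>P\<^esub> \<one>\<^bsub>P\<^esub> k \<one>\<^bsub>P\<^esub>
              = ?F' k h g \<otimes>\<^bsub>M\<^esub> ?\<Psi>' \<one>\<^bsub>P\<^esub> \<one>\<^bsub>P\<^esub> k \<one>\<^bsub>P\<^esub>"
        using Z that unfolding glue_Z2 by blast
      then show ?thesis using that by simp
    qed
    moreover have "?\<Psi> p n k m = ?\<Psi>' p n k m"
      if "p \<in> carrier P" "n \<in> carrier P" "k \<in> carrier G" "m \<in> carrier P" for p n k m
    proof -
      have "?F k \<one>\<^bsub>G\<^esub> \<one>\<^bsub>G\<^esub> \<otimes>\<^bsub>M\<^esub> ?\<Psi> p n k m
              = ?F' k \<one>\<^bsub>G\<^esub> \<one>\<^bsub>G\<^esub> \<otimes>\<^bsub>M\<^esub> ?\<Psi>' p n k m"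
        using Z that unfolding glue_Z2 by blast
      then have "?F k \<one>\<^bsub>G\<^esub> \<one>\<^bsub>G\<^esub> \<otimes>\<^bsub>M\<^esub> ?\<Psi> p n k m
                   = ?F k \<one>\<^bsub>G\<^esub> \<one>\<^bsub>G\<^esub> \<otimes>\<^bsub>M\<^esub> ?\<Psi>' p n k m"
        by (simp only: F[OF that(3) G.one_closed G.one_closed])
      then show ?thesis by (rule M.l_cancel) (use that in simp_all)
    qed
    ultimately show "\<psi> \<in> carrier EH \<and> f \<in> Z2G"
      unfolding f_Z2G \<psi>_EH by blast
  next
    assume "\<psi> \<in> carrier EH \<and> f \<in> Z2G"
    then show "glue \<psi> f \<in> Z2"
      unfolding glue_Z2 f_Z2G \<psi>_EH by auto
  qed
qed

lemma xmod_cocycle_closed: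
  "c \<in> Z2 \<Longrightarrow> p \<in> carrier P \<Longrightarrow> k \<in> carrier G \<Longrightarrow> g \<in> carrier G \<Longrightarrow> c (p,k,g) \<in> carrier M"
  by (auto simp: xmod_cocycle_iff cochains_carrier)

lemma xmod_cocycleD:
  assumes "c \<in> Z2" "p \<in> carrier P" "n \<in> carrier P" "k \<in> carrier G" "m \<in> carrier P"
    "h \<in> carrier G" "g \<in> carrier G"
  shows "c (p,k,h) \<otimes>\<^bsub>M\<^esub> c (n \<otimes>\<^bsub>P\<^esub> alpha k m, k \<otimes>\<^bsub>G\<^esub> h, g)
           = c (p \<otimes>\<^bsub>P\<^esub> n, k, h \<otimes>\<^bsub>G\<^esub> g) \<otimes>\<^bsub>M\<^esub> phi k (c (m,h,g))"
  using assms unfolding xmod_cocycle_iff by blast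

lemma xmod_cocycle_shift:
  assumes c: "c \<in> Z2" and p: "p \<in> carrier P" and k: "k \<in> carrier G" and g: "g \<in> carrier G"
  shows "c (p,k,\<one>\<^bsub>G\<^esub>) \<otimes>\<^bsub>M\<^esub> c (\<one>\<^bsub>P\<^esub>,k,g) = c (p,k,g) \<otimes>\<^bsub>M\<^esub> c (\<one>\<^bsub>P\<^esub>,k,\<one>\<^bsub>G\<^esub>)"
proof -
  note cc [simp] = xmod_cocycle_closed[OF c]
  have cocycle: "c (q,k,h) \<otimes>\<^bsub>M\<^esub> c (\<one>\<^bsub>P\<^esub>, k \<otimes>\<^bsub>G\<^esub> h, g)
                   = c (q, k, h \<otimes>\<^bsub>G\<^esub> g) \<otimes>\<^bsub>M\<^esub> phi k (c (\<one>\<^bsub>P\<^esub>,h,g))"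
    if "q \<in> carrier P" "h \<in> carrier G" for q h
    using xmod_cocycleD[OF c that(1) P.one_closed k P.one_closed that(2) g] that k by simp
  have "c (\<one>\<^bsub>P\<^esub>,k,g) \<otimes>\<^bsub>M\<^esub> c (\<one>\<^bsub>P\<^esub>,k,\<one>\<^bsub>G\<^esub>)
          = c (\<one>\<^bsub>P\<^esub>,k,g) \<otimes>\<^bsub>M\<^esub> phi k (c (\<one>\<^bsub>P\<^esub>,\<one>\<^bsub>G\<^esub>,g))"
    using cocycle[of "\<one>\<^bsub>P\<^esub>" "\<one>\<^bsub>G\<^esub>"] k g by (simp add: M.m_comm)
  then have "c (\<one>\<^bsub>P\<^esub>,k,\<one>\<^bsub>G\<^esub>) = phi k (c (\<one>\<^bsub>P\<^esub>,\<one>\<^bsub>G\<^esub>,g))"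
    by (rule M.l_cancel) (use k g in simp_all)
  then show ?thesis
    using cocycle[of p "\<one>\<^bsub>G\<^esub>"] p k g by simp
qed

lemma xmod_cocycle_middle:
  assumes c: "c \<in> Z2" and n: "n \<in> carrier P" and h: "h \<in> carrier G"
  shows "c (n,h,\<one>\<^bsub>G\<^esub>) \<otimes>\<^bsub>M\<^esub> c (\<one>\<^bsub>P\<^esub>,\<one>\<^bsub>G\<^esub>,\<one>\<^bsub>G\<^esub>)
           = c (n,\<one>\<^bsub>G\<^esub>,\<one>\<^bsub>G\<^esub>) \<otimes>\<^bsub>M\<^esub> c (\<one>\<^bsub>P\<^esub>,h,\<one>\<^bsub>G\<^esub>)"
proof -
  let ?e = "\<one>\<^bsub>P\<^esub>" and ?u = "\<one>\<^bsub>G\<^esub>"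
  note cc [simp] = xmod_cocycle_closed[OF c]
  have swap: "c (?e,?u,h) \<otimes>\<^bsub>M\<^esub> c (n,h,?u) = c (n,?u,h) \<otimes>\<^bsub>M\<^esub> c (?e,h,?u)"
    using xmod_cocycleD[OF c P.one_closed n G.one_closed P.one_closed h G.one_closed] n h by simp
  have "c (n,h,?u) \<otimes>\<^bsub>M\<^esub> c (?e,?u,?u) \<otimes>\<^bsub>M\<^esub> c (?e,?u,h)
          = c (?e,?u,?u) \<otimes>\<^bsub>M\<^esub> (c (?e,?u,h) \<otimes>\<^bsub>M\<^esub> c (n,h,?u))"
    using n h by (simp add: M.m_ac)
  also have "\<dots> = c (?e,?u,?u) \<otimes>\<^bsub>M\<^esub> (c (n,?u,h) \<otimes>\<^bsub>M\<^esub> c (?e,h,?u))"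
    by (simp only: swap)
  also have "\<dots> = c (?e,h,?u) \<otimes>\<^bsub>M\<^esub> (c (n,?u,h) \<otimes>\<^bsub>M\<^esub> c (?e,?u,?u))"
    using n h by (simp add: M.m_ac)
  also have "\<dots> = c (?e,h,?u) \<otimes>\<^bsub>M\<^esub> (c (n,?u,?u) \<otimes>\<^bsub>M\<^esub> c (?e,?u,h))"
    by (simp only: xmod_cocycle_shift[OF c n G.one_closed h])
  also have "\<dots> = c (n,?u,?u) \<otimes>\<^bsub>M\<^esub> c (?e,h,?u) \<otimes>\<^bsub>M\<^esub> c (?e,?u,h)"
    using n h by (simp add: M.m_ac)
  finally show ?thesis by (rule M.r_cancel) (use n h in simp_all)
qed

lemma xmod_cocycle_normal_form:
  assumes c: "c \<in> Z2" and p: "p \<in> carrier P" and k: "k \<in> carrier G" and g: "g \<in> carrier G"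
  shows "c (p,k,g) \<otimes>\<^bsub>M\<^esub> c (\<one>\<^bsub>P\<^esub>,\<one>\<^bsub>G\<^esub>,\<one>\<^bsub>G\<^esub>) = c (\<one>\<^bsub>P\<^esub>,k,g) \<otimes>\<^bsub>M\<^esub> c (p,\<one>\<^bsub>G\<^esub>,\<one>\<^bsub>G\<^esub>)"
proof -
  let ?e = "\<one>\<^bsub>P\<^esub>" and ?u = "\<one>\<^bsub>G\<^esub>"
  note cc [simp] = xmod_cocycle_closed[OF c]
  note shift = xmod_cocycle_shift[OF c]
  note middle = xmod_cocycle_middle[OF c]
  have "c (p,k,g) \<otimes>\<^bsub>M\<^esub> c (?e,?u,?u) \<otimes>\<^bsub>M\<^esub> c (?e,k,?u)
          = (c (p,k,g) \<otimes>\<^bsub>M\<^esub> c (?e,k,?u)) \<otimes>\<^bsub>M\<^esub> c (?e,?u,?u)"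
    using p k g by (simp add: M.m_ac)
  also have "\<dots> = (c (p,k,?u) \<otimes>\<^bsub>M\<^esub> c (?e,?u,?u)) \<otimes>\<^bsub>M\<^esub> c (?e,k,g)"
    using p k g by (simp add: shift[symmetric] M.m_ac)
  also have "\<dots> = c (?e,k,g) \<otimes>\<^bsub>M\<^esub> c (p,?u,?u) \<otimes>\<^bsub>M\<^esub> c (?e,k,?u)"
    using p k g by (simp add: middle M.m_ac)
  finally show ?thesis by (rule M.r_cancel) (use p k g in simp_all)
qed

lemma xmod_cocycle_glue: "c \<in> Z2 \<Longrightarrow> c = glue (hom_part c) (group_part c)"
proof (rule extensionalityI[where A=D3])
  assume c: "c \<in> Z2"
  then show "c \<in> extensional D3" by (simp add: xmod_cocycle_iff cochains_carrier)
  fix x assume "x \<in> D3"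
  then obtain p k g where x: "x = (p,k,g)" and p: "p \<in> carrier P" and k: "k \<in> carrier G"
    and g: "g \<in> carrier G" by auto
  have "c (p,k,g) = c (\<one>\<^bsub>P\<^esub>,k,g) \<otimes>\<^bsub>M\<^esub> c (p,\<one>\<^bsub>G\<^esub>,\<one>\<^bsub>G\<^esub>) \<otimes>\<^bsub>M\<^esub> inv\<^bsub>M\<^esub> c (\<one>\<^bsub>P\<^esub>,\<one>\<^bsub>G\<^esub>,\<one>\<^bsub>G\<^esub>)"
    using xmod_cocycle_normal_form[OF c p k g] p k g
    by (simp add: M.inv_solve_right xmod_cocycle_closed[OF c])
  then show "c x = glue (hom_part c) (group_part c) x"
    using x p k g by (simp add: glue_def hom_part_def group_part_def M.m_assoc xmod_cocycle_closed[OF c])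
qed (simp add: glue_def)

lemma xmod_cocycle_parts:
  assumes c: "c \<in> Z2"
  shows "hom_part c \<in> carrier EH" and "group_part c \<in> Z2G"
proof -
  have C2: "c \<in> carrier C2" using c by (simp add: xmod_cocycle_iff)
  have "group_part c \<in> carrier G2"
    using C2 by (auto simp: group_part_def cochains_carrier)
  moreover have "glue (hom_part c) (group_part c) \<in> Z2"
    using c by (simp only: xmod_cocycle_glue[OF c, symmetric])
  ultimately have "hom_part c \<in> carrier EH \<and> group_part c \<in> Z2G"
    using glue_cocycle_iff[OF hom_part_normalized[OF C2]] by blast
  then show "hom_part c \<in> carrier EH" and "group_part c \<in> Z2G" by auto
qed

lemma grp_d1_hom: "grp_d1 G M phi \<in> hom C1 G2"
  by (rule cochain_map_hom[OF M.comm_group_axioms])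
    (auto simp: grp_d1_def cochains_carrier phi_mult M.inv_mult M.m_ac)

lemma grp_d2_hom: "grp_d2 G M phi \<in> hom G2 G3"
  by (rule cochain_map_hom[OF M.comm_group_axioms])
    (auto simp: grp_d2_def cochains_carrier phi_mult M.inv_mult M.m_ac)

lemma xmod_d2_hom: "xmod_d2 G P (\<lambda>_. \<one>\<^bsub>G\<^esub>) alpha M phi \<in> hom C2 (cochains D6 M)"
  by (rule cochain_map_hom[OF M.comm_group_axioms])
    (auto simp: xmod_d2_def cochains_carrier phi_mult M.inv_mult M.m_ac)

abbreviation "ZX \<equiv> C2\<lparr>carrier := Z2\<rparr>"
abbreviation "ZG \<equiv> G2\<lparr>carrier := Z2G\<rparr>"
abbreviation "H2G \<equiv> ZG Mod B2G"

lemma xmod_cocycles_subgroup: "subgroup Z2 C2"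
proof -
  interpret d2: group_hom C2 "cochains D6 M" "xmod_d2 G P (\<lambda>_. \<one>\<^bsub>G\<^esub>) alpha M phi"
    by (simp add: group_hom_def group_hom_axioms_def xmod_d2_hom comm_group.axioms(2)
        cochains_comm_group_M)
  show ?thesis using d2.subgroup_kernel by (simp add: kernel_def xmod_Z2_def xmod_C2_def)
qed

lemma grp_cocycles_subgroup: "subgroup Z2G G2"
proof -
  interpret d2: group_hom G2 G3 "grp_d2 G M phi"
    by (simp add: group_hom_def group_hom_axioms_def grp_d2_hom comm_group.axioms(2)
        cochains_comm_group_M)
  show ?thesis using d2.subgroup_kernel by (simp add: kernel_def)
qed

lemma grp_coboundaries_normal: "B2G \<lhd> ZG"
proof -
  interpret d1: group_hom C1 G2 "grp_d1 G M phi"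
    by (simp add: group_hom_def group_hom_axioms_def grp_d1_hom comm_group.axioms(2)
        cochains_comm_group_M)
  show ?thesis
    using comm_group.subgroup_normal_in_subgroup[OF cochains_comm_group_M d1.img_is_subgroup
        grp_cocycles_subgroup] grp_coboundary_cocycle by blast
qed

lemma trivial_equiv_hom: "(\<lambda>p\<in>carrier P. \<one>\<^bsub>M\<^esub>) \<in> carrier EH"
  by (auto simp: equiv_Hom_carrier hom_def)

lemma equiv_Hom_group: "group EH"
proof -
  interpret C: comm_group "cochains (carrier P) M" by (rule cochains_comm_group_M)
  have EH_sub: "carrier EH \<subseteq> carrier (cochains (carrier P) M)"
    by (auto simp: equiv_Hom_carrier cochains_carrier hom_def)
  have "subgroup (carrier EH) (cochains (carrier P) M)"
  proof (rule C.subgroupI[OF EH_sub])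
    show "carrier EH \<noteq> {}" using trivial_equiv_hom by blast
  next
    fix a assume a: "a \<in> carrier EH"
    then have "a \<in> carrier (cochains (carrier P) M)" using EH_sub by blast
    then have "inv\<^bsub>cochains (carrier P) M\<^esub> a = (\<lambda>p\<in>carrier P. inv\<^bsub>M\<^esub> a p)"
      by (intro C.inv_equality) (auto simp: cochains_carrier)
    then show "inv\<^bsub>cochains (carrier P) M\<^esub> a \<in> carrier EH"
      using a equiv_Hom_closed[OF a] by (auto simp: equiv_Hom_carrier hom_def M.inv_mult)
  next
    fix a b assume a: "a \<in> carrier EH" and b: "b \<in> carrier EH"
    then show "a \<otimes>\<^bsub>cochains (carrier P) M\<^esub> b \<in> carrier EH"
      using equiv_Hom_closed[OF a] equiv_Hom_closed[OF b]
      by (auto simp: equiv_Hom_carrier hom_def M.m_ac phi_mult)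
  qed
  then show ?thesis
    using subgroup.subgroup_is_group[OF _ C.is_group] by (simp add: equiv_Hom_def)
qed

lemma xmod_coboundary_glue:
  assumes b: "b \<in> carrier C1"
  shows "xmod_d1 G P (\<lambda>_. \<one>\<^bsub>G\<^esub>) M phi b = glue (\<lambda>p\<in>carrier P. \<one>\<^bsub>M\<^esub>) (grp_d1 G M phi b)"
  using b by (intro extensionalityI[where A=D3])
    (auto simp: xmod_d1_def glue_def grp_d1_def cochains_carrier M.m_ac)

subsection \<open>The isomorphism\<close>

definition decompose :: "('p \<times> 'g \<times> 'g \<Rightarrow> 'm) \<Rightarrow> ('p \<Rightarrow> 'm) \<times> ('g \<times> 'g \<Rightarrow> 'm) set" where
  "decompose c = (hom_part c, B2G #>\<^bsub>ZG\<^esub> group_part c)"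

lemma hom_part_mult:
  assumes "c \<in> carrier C2" "c' \<in> carrier C2"
  shows "hom_part (c \<otimes>\<^bsub>C2\<^esub> c') = hom_part c \<otimes>\<^bsub>EH\<^esub> hom_part c'"
  using assms by (intro extensionalityI[where A="carrier P"])
    (auto simp: hom_part_def equiv_Hom_def cochains_carrier M.inv_mult M.m_ac)

lemma group_part_mult: "group_part (c \<otimes>\<^bsub>C2\<^esub> c') = group_part c \<otimes>\<^bsub>G2\<^esub> group_part c'"
  by (intro extensionalityI[where A="carrier G \<times> carrier G"]) (auto simp: group_part_def)

lemma decompose_hom: "decompose \<in> hom ZX (EH \<times>\<times> H2G)"
proof -
  have coset: "(\<lambda>f. B2G #>\<^bsub>ZG\<^esub> f) \<in> hom ZG H2G"
    using normal.r_coset_hom_Mod[OF grp_coboundaries_normal] .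
  show ?thesis
  proof (rule homI)
    fix c assume "c \<in> carrier ZX"
    then show "decompose c \<in> carrier (EH \<times>\<times> H2G)"
      using xmod_cocycle_parts coset by (auto simp: decompose_def hom_def)
  next
    fix c c' assume c: "c \<in> carrier ZX" and c': "c' \<in> carrier ZX"
    then have C2: "c \<in> carrier C2" "c' \<in> carrier C2" by (auto simp: xmod_cocycle_iff)
    have "group_part (c \<otimes>\<^bsub>ZX\<^esub> c') = group_part c \<otimes>\<^bsub>ZG\<^esub> group_part c'"
      using group_part_mult[of c c'] by simp
    then have "B2G #>\<^bsub>ZG\<^esub> group_part (c \<otimes>\<^bsub>ZX\<^esub> c')
        = (B2G #>\<^bsub>ZG\<^esub> group_part c) \<otimes>\<^bsub>H2G\<^esub> (B2G #>\<^bsub>ZG\<^esub> group_part c')"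
      using hom_mult[OF coset] xmod_cocycle_parts(2) c c' by simp
    moreover have "hom_part (c \<otimes>\<^bsub>ZX\<^esub> c') = hom_part c \<otimes>\<^bsub>EH\<^esub> hom_part c'"
      using hom_part_mult[OF C2] by simp
    ultimately show "decompose (c \<otimes>\<^bsub>ZX\<^esub> c') = decompose c \<otimes>\<^bsub>EH \<times>\<times> H2G\<^esub> decompose c'"
      by (simp only: decompose_def mult_DirProd)
  qed
qed

lemma decompose_surj: "decompose ` carrier ZX = carrier (EH \<times>\<times> H2G)"
proof
  show "decompose ` carrier ZX \<subseteq> carrier (EH \<times>\<times> H2G)"
    using hom_carrier[OF decompose_hom] .
next
  show "carrier (EH \<times>\<times> H2G) \<subseteq> decompose ` carrier ZX"
  proof
    fix y assume "y \<in> carrier (EH \<times>\<times> H2G)"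
    then obtain \<psi> f where y: "y = (\<psi>, B2G #>\<^bsub>ZG\<^esub> f)" and \<psi>: "\<psi> \<in> carrier EH" and f: "f \<in> Z2G"
      by (auto simp: carrier_FactGroup)
    have \<psi>n: "normalized \<psi>" and fG2: "f \<in> carrier G2"
      using equiv_Hom_normalized[OF \<psi>] f by auto
    have "glue \<psi> f \<in> carrier ZX"
      using glue_cocycle_iff[OF \<psi>n fG2] \<psi> f by simp
    moreover have "decompose (glue \<psi> f) = y"
      by (simp add: y decompose_def hom_part_glue[OF \<psi>n fG2] group_part_glue[OF \<psi>n fG2])
    ultimately show "y \<in> decompose ` carrier ZX" by blast
  qed
qed

lemma class_trivial_iff: "f \<in> Z2G \<Longrightarrow> B2G #>\<^bsub>ZG\<^esub> f = B2G \<longleftrightarrow> f \<in> B2G"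
proof -
  interpret ZG: group ZG
    using subgroup.subgroup_is_group[OF grp_cocycles_subgroup] comm_group.axioms(2)[OF cochains_comm_group_M]
    by blast
  have B2G_sub: "subgroup B2G ZG" using grp_coboundaries_normal normal_imp_subgroup by blast
  assume "f \<in> Z2G"
  then show ?thesis
    using ZG.coset_join1[of B2G f] subgroup.rcos_const[OF B2G_sub ZG.is_group, of f] B2G_sub
    by auto
qed

lemma decompose_one: "\<one>\<^bsub>EH \<times>\<times> H2G\<^esub> = (\<lambda>p\<in>carrier P. \<one>\<^bsub>M\<^esub>, B2G)"
  by (simp only: one_DirProd one_FactGroup) (simp add: equiv_Hom_def)

lemma decompose_kernel: "kernel ZX (EH \<times>\<times> H2G) decompose = B2"
proof -
  let ?triv = "\<lambda>p\<in>carrier P. \<one>\<^bsub>M\<^esub>"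
  have triv_normalized: "normalized ?triv" using equiv_Hom_normalized[OF trivial_equiv_hom] .
  have "c \<in> kernel ZX (EH \<times>\<times> H2G) decompose \<longleftrightarrow> c \<in> B2" for c
  proof
    assume "c \<in> kernel ZX (EH \<times>\<times> H2G) decompose"
    then have c: "c \<in> Z2" and hp: "hom_part c = ?triv" and "B2G #>\<^bsub>ZG\<^esub> group_part c = B2G"
      unfolding kernel_def decompose_one decompose_def by auto
    then obtain b where b: "b \<in> carrier C1" and gp: "group_part c = grp_d1 G M phi b"
      using class_trivial_iff xmod_cocycle_parts(2)[OF c] by auto
    have "c = xmod_d1 G P (\<lambda>_. \<one>\<^bsub>G\<^esub>) M phi b"
      using xmod_cocycle_glue[OF c] by (simp add: hp gp xmod_coboundary_glue[OF b])
    then show "c \<in> B2" using b by (auto simp: xmod_B2_def)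
  next
    assume "c \<in> B2"
    then obtain b where b: "b \<in> carrier C1" and cb: "c = glue ?triv (grp_d1 G M phi b)"
      by (auto simp: xmod_B2_def xmod_coboundary_glue)
    have d1: "grp_d1 G M phi b \<in> Z2G" by (rule grp_coboundary_cocycle[OF b])
    then have "c \<in> Z2"
      using glue_cocycle_iff[OF triv_normalized] trivial_equiv_hom cb by simp
    moreover have "decompose c = (?triv, B2G)"
      using d1 b class_trivial_iff
      by (simp add: cb decompose_def hom_part_glue[OF triv_normalized] group_part_glue[OF triv_normalized])
    ultimately show "c \<in> kernel ZX (EH \<times>\<times> H2G) decompose"
      unfolding kernel_def decompose_one by simp
  qed
  then show ?thesis by blast
qed

theorem xmod_H2_iso:
  "xmod_H2 G P (\<lambda>_. \<one>\<^bsub>G\<^esub>) alpha M phi \<cong> EH \<times>\<times> grp_H2 G M phi"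
proof -
  have "group ZX"
    using subgroup.subgroup_is_group[OF xmod_cocycles_subgroup]
      comm_group.axioms(2)[OF cochains_comm_group_M] by blast
  moreover have "group (EH \<times>\<times> H2G)"
    using DirProd_group[OF equiv_Hom_group normal.factorgroup_is_group[OF grp_coboundaries_normal]] .
  ultimately interpret decompose: group_hom ZX "EH \<times>\<times> H2G" decompose
    using decompose_hom by (simp add: group_hom_def group_hom_axioms_def)
  show ?thesis
    using decompose.FactGroup_iso[OF decompose_surj]
    unfolding decompose_kernel xmod_H2_def xmod_C2_def grp_H2_def .
qed

end

theorem mainTheorem16:
  fixes Pi0 :: "('g,'x) monoid_scheme" and Pi1 :: "('p,'z) monoid_scheme"
    and M :: "('m,'y) monoid_scheme"
    and alpha :: "'g \<Rightarrow> 'p \<Rightarrow> 'p" and phi :: "'g \<Rightarrow> 'm \<Rightarrow> 'm"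
  assumes "group Pi0"
    and "G_module Pi0 Pi1 alpha"
    and "G_module Pi0 M phi"
  shows "xmod_H2 Pi0 Pi1 (\<lambda>_. \<one>\<^bsub>Pi0\<^esub>) alpha M phi
           \<cong> (equiv_Hom Pi0 Pi1 alpha M phi \<times>\<times> grp_H2 Pi0 M phi)"
proof -
  interpret trivial_boundary_xmod Pi0 Pi1 M alpha phi
    using assms(2,3) by unfold_locales
  show ?thesis by (rule xmod_H2_iso)
qed

end
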